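(* Let $G$ be a two-player game (players White and Black) with a finite set $\mathcal{P}$ of positions, in which every non-terminal position has at least one White option and at least one Black option, and in which each terminal position is designated as won by White or won by Black. Let $\alpha_n$, $\beta_n$, $\alpha$, $\beta$ be defined as in the context. Then for every position $P\in\mathcal{P}$, the numbers $\alpha(P)$ and $\beta(P)$ are rational.
   Context: The game is given by a finite set $\mathcal{P}$ of positions; each position $P$ has a set of White options and a set of Black options (positions $P_w$, resp. $P_b$, to which White, resp. Black, can move from $P$). Some positions are terminal, each designated as a White win or a Black win. Define $\alpha_n,\beta_n:\mathcal{P}\to[0,1]$ for $n\ge 0$ by: for every $n$, $\alpha_n(P)=\beta_n(P)=1$ if $P$ is a terminal White win and $\alpha_n(P)=\beta_n(P)=0$ if $P$ is a terminal Black win; for non-terminal $P$, $\alpha_0(P)=0$, $\beta_0(P)=1$, and $$\alpha_{n+1}(P)=\tfrac12\Big(\max_w \alpha_n(P_w)+\min_b \alpha_n(P_b)\Big),\qquad \beta_{n+1}(P)=\tfrac12\Big(\max_w \beta_n(P_w)+\min_b \beta_n(P_b)\Big),$$ where $w$ ranges over White options and $b$ over Black options of $P$. The sequence $\alpha_n(P)$ is nondecreasing and $\beta_n(P)$ is nonincreasing; set $\alpha(P)=\lim_n\alpha_n(P)$ and $\beta(P)=\lim_n\beta_n(P)$. (In the bidding interpretation with total money $1$, $\alpha(P)$ is the threshold of Black's bankroll below which White can force a win, and $\beta(P)$ the amount Black needs to force a win; in the random-turn interpretation with a fair coin deciding who moves, they are White's optimal probabilities of winning and of not losing.) *)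

theory Defs
  imports Complex_Main
begin

text \<open>A game: terminal predicate T, predicate Wwin (terminal White win; otherwise a
terminal position is a Black win), White options Wo and Black options Bo.
game_iter c n p is alpha_n (for c = 0) and beta_n (for c = 1).\<close>

fun game_iter :: "real \<Rightarrow> ('p \<Rightarrow> bool) \<Rightarrow> ('p \<Rightarrow> bool) \<Rightarrow> ('p \<Rightarrow> 'p set) \<Rightarrow> ('p \<Rightarrow> 'p set)
                  \<Rightarrow> nat \<Rightarrow> 'p \<Rightarrow> real" where
  "game_iter c T Wwin Wo Bo 0 p =
     (if T p then (if Wwin p then 1 else 0) else c)"
| "game_iter c T Wwin Wo Bo (Suc n) p =
     (if T p then (if Wwin p then 1 else 0)
      else (Max (game_iter c T Wwin Wo Bo n ` Wo p) + Min (game_iter c T Wwin Wo Bo n ` Bo p)) / 2)"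

definition alpha_n :: "('p \<Rightarrow> bool) \<Rightarrow> ('p \<Rightarrow> bool) \<Rightarrow> ('p \<Rightarrow> 'p set) \<Rightarrow> ('p \<Rightarrow> 'p set) \<Rightarrow> nat \<Rightarrow> 'p \<Rightarrow> real" where
  "alpha_n T Wwin Wo Bo n p = game_iter 0 T Wwin Wo Bo n p"

definition beta_n :: "('p \<Rightarrow> bool) \<Rightarrow> ('p \<Rightarrow> bool) \<Rightarrow> ('p \<Rightarrow> 'p set) \<Rightarrow> ('p \<Rightarrow> 'p set) \<Rightarrow> nat \<Rightarrow> 'p \<Rightarrow> real" where
  "beta_n T Wwin Wo Bo n p = game_iter 1 T Wwin Wo Bo n p"

definition alpha :: "('p \<Rightarrow> bool) \<Rightarrow> ('p \<Rightarrow> bool) \<Rightarrow> ('p \<Rightarrow> 'p set) \<Rightarrow> ('p \<Rightarrow> 'p set) \<Rightarrow> 'p \<Rightarrow> real" where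
  "alpha T Wwin Wo Bo p = lim (\<lambda>n. alpha_n T Wwin Wo Bo n p)"

definition beta :: "('p \<Rightarrow> bool) \<Rightarrow> ('p \<Rightarrow> bool) \<Rightarrow> ('p \<Rightarrow> 'p set) \<Rightarrow> ('p \<Rightarrow> 'p set) \<Rightarrow> 'p \<Rightarrow> real" where
  "beta T Wwin Wo Bo p = lim (\<lambda>n. beta_n T Wwin Wo Bo n p)"

end

theory Submission
  imports Defs
begin

text \<open>The limit \<open>\<alpha>\<close> is the least nonnegative fixed point of the averaging operator
\<open>B g (P) = (max\<^sub>w g(P\<^sub>w) + min\<^sub>b g(P\<^sub>b)) / 2\<close>. Suppose \<open>\<alpha>(x)\<close> were irrational and take a
\<open>\<rat>\<close>-linear \<open>\<psi> : \<real> \<rightarrow> \<real>\<close> with \<open>\<psi>(1) = 0\<close> and \<open>\<psi>(\<alpha>(x)) = 1\<close>. The maps \<open>\<phi>\<^sub>t = id + t\<psi>\<close>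
are additive and fix \<open>0\<close> and \<open>1\<close>, so they commute with \<open>B\<close> as long as they are monotone on
the finitely many values of \<open>\<alpha>\<close>, which holds for small \<open>t\<close>. Then \<open>\<phi>\<^sub>t \<circ> \<alpha>\<close> is another
nonnegative fixed point, hence \<open>\<alpha> \<le> \<phi>\<^sub>t \<circ> \<alpha>\<close>, which fails at \<open>x\<close> for \<open>t < 0\<close>.
Finally \<open>\<beta> = 1 - \<alpha>'\<close>, where \<open>\<alpha>'\<close> belongs to the game with the roles of the players swapped.\<close>

interpretation rat_vs: vector_space "\<lambda>q (x::real). of_rat q * x"
  by unfold_locales (auto simp: algebra_simps of_rat_add of_rat_mult)

interpretation rat_vs_pair: vector_space_pair "\<lambda>q (x::real). of_rat q * x" "\<lambda>q (x::real). of_rat q * x" ..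

lemma irrational_imp_additive_separation:
  fixes a :: real
  assumes "a \<notin> \<rat>"
  shows "\<exists>\<psi>::real \<Rightarrow> real. additive \<psi> \<and> \<psi> 1 = 0 \<and> \<psi> a = 1"
proof -
  have "a \<noteq> 1" using assms by auto
  have "rat_vs.independent {1::real}"
    using rat_vs.independent_insertI[of 1 "{}"] by simp
  moreover have "a \<notin> rat_vs.span {1}"
    using assms unfolding rat_vs.span_singleton by (auto simp: Rats_def)
  ultimately have indep: "rat_vs.independent {a, 1}"
    by (rule rat_vs.independent_insertI[rotated])
  define \<psi> where "\<psi> = rat_vs_pair.construct {a, 1} (\<lambda>x. if x = 1 then 0 else 1)"
  have "Vector_Spaces.linear (\<lambda>q (x::real). of_rat q * x) (\<lambda>q (x::real). of_rat q * x) \<psi>"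
    unfolding \<psi>_def by (rule rat_vs_pair.linear_construct[OF indep])
  then have "additive \<psi>"
    by unfold_locales (rule rat_vs_pair.linear_add)
  moreover have "\<psi> 1 = 0" "\<psi> a = 1"
    unfolding \<psi>_def using rat_vs_pair.construct_basis[OF indep] \<open>a \<noteq> 1\<close> by simp_all
  ultimately show ?thesis by blast
qed

lemma additive_half:
  fixes \<phi> :: "'a::field_char_0 \<Rightarrow> 'b::field_char_0"
  assumes "additive \<phi>"
  shows "\<phi> (x / 2) = \<phi> x / 2"
  using additive.add[OF assms, of "x / 2" "x / 2"] by simp

lemma eventually_mono_on_perturbation:
  fixes \<psi> :: "real \<Rightarrow> real"
  assumes "finite V"
  shows "\<forall>\<^sub>F t in nhds 0. mono_on V (\<lambda>x. x + t * \<psi> x)"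
proof -
  have "\<forall>\<^sub>F t in nhds 0. x + t * \<psi> x \<le> y + t * \<psi> y"
    if "x \<le> y" for x y
  proof (cases "x = y")
    case False
    have "((\<lambda>t. (y - x) + t * (\<psi> y - \<psi> x)) \<longlongrightarrow> (y - x) + 0 * (\<psi> y - \<psi> x)) (nhds 0)"
      by (intro tendsto_intros filterlim_ident)
    then have "\<forall>\<^sub>F t in nhds 0. 0 < (y - x) + t * (\<psi> y - \<psi> x)"
      using \<open>x \<le> y\<close> False by (intro order_tendstoD(1)) auto
    then show ?thesis
      by eventually_elim (simp add: algebra_simps)
  qed simp
  then have "\<forall>\<^sub>F t in nhds 0. \<forall>(x, y) \<in> V \<times> V. x \<le> y \<longrightarrow> x + t * \<psi> x \<le> y + t * \<psi> y"
    using assms by (intro eventually_ball_finite) auto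
  then show ?thesis
    by eventually_elim (auto intro!: mono_onI)
qed

lemma mono_on_Max_commute:
  assumes "mono_on S f" "finite A" "A \<noteq> {}" "A \<subseteq> S"
  shows "f (Max A) = Max (f ` A)"
proof (rule Max_eqI[symmetric])
  fix y assume "y \<in> f ` A"
  then show "y \<le> f (Max A)"
    using assms by (auto intro!: mono_onD[OF assms(1)] Max_in)
qed (use assms in auto)

lemma mono_on_Min_commute:
  assumes "mono_on S f" "finite A" "A \<noteq> {}" "A \<subseteq> S"
  shows "f (Min A) = Min (f ` A)"
proof (rule Min_eqI[symmetric])
  fix y assume "y \<in> f ` A"
  then show "f (Min A) \<le> y"
    using assms by (auto intro!: mono_onD[OF assms(1)] Min_in)
qed (use assms in auto)

lemma Max_image_mono:
  fixes f g :: "'a \<Rightarrow> 'b::linorder"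
  assumes "finite A" "A \<noteq> {}" "\<And>x. x \<in> A \<Longrightarrow> f x \<le> g x"
  shows "Max (f ` A) \<le> Max (g ` A)"
  using assms by (auto simp: Max_le_iff intro: order.trans[OF _ Max_ge])

lemma Min_image_mono:
  fixes f g :: "'a \<Rightarrow> 'b::linorder"
  assumes "finite A" "A \<noteq> {}" "\<And>x. x \<in> A \<Longrightarrow> f x \<le> g x"
  shows "Min (f ` A) \<le> Min (g ` A)"
  using assms by (auto simp: Min_ge_iff intro: order.trans[OF Min_le])

lemma tendsto_Max_image:
  fixes f :: "'a \<Rightarrow> 'b \<Rightarrow> 'c::linorder_topology"
  assumes "finite A" "A \<noteq> {}" "\<And>x. x \<in> A \<Longrightarrow> ((\<lambda>n. f n x) \<longlongrightarrow> g x) F"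
  shows "((\<lambda>n. Max (f n ` A)) \<longlongrightarrow> Max (g ` A)) F"
  using assms by (induction A rule: finite_ne_induct) (simp_all add: tendsto_max)

lemma tendsto_Min_image:
  fixes f :: "'a \<Rightarrow> 'b \<Rightarrow> 'c::linorder_topology"
  assumes "finite A" "A \<noteq> {}" "\<And>x. x \<in> A \<Longrightarrow> ((\<lambda>n. f n x) \<longlongrightarrow> g x) F"
  shows "((\<lambda>n. Min (f n ` A)) \<longlongrightarrow> Min (g ` A)) F"
  using assms by (induction A rule: finite_ne_induct) (simp_all add: tendsto_min)

lemma Max_image_one_minus:
  fixes f :: "'a \<Rightarrow> real"
  assumes "finite A" "A \<noteq> {}"
  shows "Max ((\<lambda>x. 1 - f x) ` A) = 1 - Min (f ` A)"
  using assms Max_add_commute[of A "\<lambda>x. - f x" 1] minus_Min_eq_Max[of "f ` A"]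
  by (simp add: image_image)

lemma Min_image_one_minus:
  fixes f :: "'a \<Rightarrow> real"
  assumes "finite A" "A \<noteq> {}"
  shows "Min ((\<lambda>x. 1 - f x) ` A) = 1 - Max (f ` A)"
  using assms Min_add_commute[of A "\<lambda>x. - f x" 1] minus_Max_eq_Min[of "f ` A"]
  by (simp add: image_image)

lemma game_iter_terminal: "T p \<Longrightarrow> game_iter c T Wwin Wo Bo n p = (if Wwin p then 1 else 0)"
  by (cases n) simp_all

declare game_iter.simps [simp del]

locale finite_game =
  fixes Pos :: "'p set" and T Wwin :: "'p \<Rightarrow> bool" and Wo Bo :: "'p \<Rightarrow> 'p set"
  assumes finite_Pos: "finite Pos"
    and Wo_subset: "p \<in> Pos \<Longrightarrow> Wo p \<subseteq> Pos"
    and Bo_subset: "p \<in> Pos \<Longrightarrow> Bo p \<subseteq> Pos"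
    and Wo_nonempty: "p \<in> Pos \<Longrightarrow> \<not> T p \<Longrightarrow> Wo p \<noteq> {}"
    and Bo_nonempty: "p \<in> Pos \<Longrightarrow> \<not> T p \<Longrightarrow> Bo p \<noteq> {}"
begin

lemma finite_Wo: "p \<in> Pos \<Longrightarrow> finite (Wo p)"
  using Wo_subset finite_Pos finite_subset by blast

lemma finite_Bo: "p \<in> Pos \<Longrightarrow> finite (Bo p)"
  using Bo_subset finite_Pos finite_subset by blast

definition bellman :: "('p \<Rightarrow> real) \<Rightarrow> 'p \<Rightarrow> real" where
  "bellman g p = (if T p then (if Wwin p then 1 else 0) else (Max (g ` Wo p) + Min (g ` Bo p)) / 2)"

abbreviation win_iter :: "nat \<Rightarrow> 'p \<Rightarrow> real" where
  "win_iter \<equiv> game_iter 0 T Wwin Wo Bo"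

definition win_prob :: "'p \<Rightarrow> real" where
  "win_prob p = lim (\<lambda>n. win_iter n p)"

lemma game_iter_0: "p \<in> Pos \<Longrightarrow> game_iter c T Wwin Wo Bo 0 p = bellman (\<lambda>_. c) p"
  using Wo_nonempty Bo_nonempty by (simp add: bellman_def game_iter.simps image_constant_conv)

lemma game_iter_Suc: "game_iter c T Wwin Wo Bo (Suc n) = bellman (game_iter c T Wwin Wo Bo n)"
  by (simp add: bellman_def fun_eq_iff game_iter.simps)

lemma bellman_mono:
  assumes "\<And>q. q \<in> Pos \<Longrightarrow> g q \<le> h q" "p \<in> Pos"
  shows "bellman g p \<le> bellman h p"
proof (cases "T p")
  case False
  have "Max (g ` Wo p) \<le> Max (h ` Wo p)"
    using assms Wo_subset finite_Wo Wo_nonempty False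
    by (intro Max_image_mono) auto
  moreover have "Min (g ` Bo p) \<le> Min (h ` Bo p)"
    using assms Bo_subset finite_Bo Bo_nonempty False
    by (intro Min_image_mono) auto
  ultimately show ?thesis
    using False by (simp add: bellman_def)
qed (simp add: bellman_def)

lemma bellman_comp:
  assumes "additive \<phi>" "\<phi> 1 = 1" "mono_on S \<phi>" "g ` Pos \<subseteq> S" "p \<in> Pos"
  shows "bellman (\<phi> \<circ> g) p = \<phi> (bellman g p)"
proof (cases "T p")
  case False
  have "\<phi> (Max (g ` Wo p)) = Max ((\<phi> \<circ> g) ` Wo p)"
    using assms Wo_subset finite_Wo Wo_nonempty False
    by (subst mono_on_Max_commute[where S = S]) (auto simp: image_comp)
  moreover have "\<phi> (Min (g ` Bo p)) = Min ((\<phi> \<circ> g) ` Bo p)"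
    using assms Bo_subset finite_Bo Bo_nonempty False
    by (subst mono_on_Min_commute[where S = S]) (auto simp: image_comp)
  ultimately show ?thesis
    using False additive_half[OF assms(1)] additive.add[OF assms(1)] by (simp add: bellman_def)
qed (use assms additive.zero in \<open>auto simp: bellman_def\<close>)

lemma win_iter_mono: "p \<in> Pos \<Longrightarrow> win_iter n p \<le> win_iter (Suc n) p"
proof (induction n arbitrary: p)
  case 0
  have "0 \<le> win_iter 0 q" for q
    by (simp add: game_iter.simps)
  then show ?case
    unfolding game_iter_0[OF 0] game_iter_Suc by (intro bellman_mono 0)
next
  case (Suc n)
  then show ?case
    unfolding game_iter_Suc by (intro bellman_mono)
qed

lemma win_iter_nonneg: "p \<in> Pos \<Longrightarrow> 0 \<le> win_iter n p"
proof (induction n)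
  case (Suc n)
  then show ?case using win_iter_mono order.trans by blast
qed (simp add: game_iter.simps)

lemma win_iter_le_one: "p \<in> Pos \<Longrightarrow> win_iter n p \<le> 1"
proof (induction n arbitrary: p)
  case (Suc n)
  then have "win_iter (Suc n) p \<le> bellman (\<lambda>_. 1) p"
    unfolding game_iter_Suc by (intro bellman_mono)
  also have "\<dots> \<le> 1"
    using Suc.prems Wo_nonempty Bo_nonempty finite_Wo finite_Bo by (simp add: bellman_def)
  finally show ?case .
qed (simp add: game_iter.simps)

lemma win_iter_tendsto:
  assumes "p \<in> Pos"
  shows "(\<lambda>n. win_iter n p) \<longlonglongrightarrow> win_prob p"
proof -
  have "incseq (\<lambda>n. win_iter n p)"
    using win_iter_mono[OF assms] by (simp add: incseq_SucI)
  moreover have "bdd_above (range (\<lambda>n. win_iter n p))"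
    using win_iter_le_one[OF assms] by (intro bdd_aboveI[where M = 1]) auto
  ultimately have "convergent (\<lambda>n. win_iter n p)"
    unfolding convergent_def by (blast intro: LIMSEQ_incseq_SUP)
  then show ?thesis
    unfolding win_prob_def by (simp add: convergent_LIMSEQ_iff)
qed

lemma win_prob_nonneg: "p \<in> Pos \<Longrightarrow> 0 \<le> win_prob p"
  by (intro LIMSEQ_le_const[OF win_iter_tendsto]) (auto intro: win_iter_nonneg)

lemma win_prob_fixpoint:
  assumes "p \<in> Pos"
  shows "bellman win_prob p = win_prob p"
proof (cases "T p")
  case False
  have "(\<lambda>n. bellman (win_iter n) p) \<longlonglongrightarrow> bellman win_prob p"
    using assms False Wo_subset Bo_subset finite_Wo finite_Bo Wo_nonempty Bo_nonempty
    unfolding bellman_def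
    by (auto intro!: tendsto_intros tendsto_Max_image tendsto_Min_image win_iter_tendsto)
  moreover have "(\<lambda>n. bellman (win_iter n) p) \<longlonglongrightarrow> win_prob p"
    using LIMSEQ_Suc[OF win_iter_tendsto[OF assms]] by (simp add: game_iter_Suc)
  ultimately show ?thesis
    by (rule LIMSEQ_unique)
next
  case True
  then have "(\<lambda>n. win_iter n p) = (\<lambda>_. bellman win_prob p)"
    by (simp add: bellman_def game_iter_terminal)
  then show ?thesis
    using win_iter_tendsto[OF assms] by (simp add: LIMSEQ_const_iff)
qed

lemma win_prob_least_fixpoint:
  assumes "\<And>q. q \<in> Pos \<Longrightarrow> 0 \<le> g q" "\<And>q. q \<in> Pos \<Longrightarrow> bellman g q = g q" "p \<in> Pos"
  shows "win_prob p \<le> g p"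
proof -
  have "win_iter n q \<le> g q" if "q \<in> Pos" for n q
    using that
  proof (induction n arbitrary: q)
    case 0
    then show ?case
      using assms(1,2) by (metis bellman_mono game_iter_0)
  next
    case (Suc n)
    then show ?case
      using assms(2) by (metis bellman_mono game_iter_Suc)
  qed
  then show ?thesis
    by (intro LIMSEQ_le_const2[OF win_iter_tendsto[OF assms(3)]]) (use assms(3) in blast)
qed

lemma win_prob_le_additive_image:
  assumes "additive \<phi>" "\<phi> 1 = 1" "mono_on (insert 0 (win_prob ` Pos)) \<phi>" "p \<in> Pos"
  shows "win_prob p \<le> \<phi> (win_prob p)"
proof -
  have "0 \<le> \<phi> (win_prob q)" if "q \<in> Pos" for q
    using mono_onD[OF assms(3), of 0 "win_prob q"] that win_prob_nonneg additive.zero[OF assms(1)] by simp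
  moreover have "bellman (\<phi> \<circ> win_prob) q = \<phi> (win_prob q)" if "q \<in> Pos" for q
  proof -
    have "bellman (\<phi> \<circ> win_prob) q = \<phi> (bellman win_prob q)"
      using that by (intro bellman_comp[OF assms(1-3)]) auto
    then show ?thesis
      using win_prob_fixpoint[OF that] by simp
  qed
  ultimately show ?thesis
    using win_prob_least_fixpoint[of "\<phi> \<circ> win_prob"] assms(4) by simp
qed

lemma win_prob_rational:
  assumes "p \<in> Pos"
  shows "win_prob p \<in> \<rat>"
proof (rule ccontr)
  assume "win_prob p \<notin> \<rat>"
  then obtain \<psi> :: "real \<Rightarrow> real" where \<psi>: "additive \<psi>" "\<psi> 1 = 0" "\<psi> (win_prob p) = 1"
    using irrational_imp_additive_separation by blast
  have "finite (insert 0 (win_prob ` Pos))"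
    using finite_Pos by simp
  from eventually_mono_on_perturbation[OF this, of \<psi>]
  obtain \<epsilon> where "\<epsilon> > 0"
    and mono: "\<And>t. \<bar>t\<bar> < \<epsilon> \<Longrightarrow> mono_on (insert 0 (win_prob ` Pos)) (\<lambda>x. x + t * \<psi> x)"
    unfolding eventually_nhds_metric dist_real_def by auto
  define t where "t = - \<epsilon> / 2"
  have "additive (\<lambda>x. x + t * \<psi> x)"
    by unfold_locales (simp add: additive.add[OF \<psi>(1)] algebra_simps)
  moreover have "\<bar>t\<bar> < \<epsilon>"
    using \<open>\<epsilon> > 0\<close> by (simp add: t_def)
  ultimately have "win_prob p \<le> win_prob p + t * \<psi> (win_prob p)"
    using win_prob_le_additive_image[OF _ _ mono assms] \<psi>(2) by simp
  then show False
    using \<psi>(3) \<open>\<epsilon> > 0\<close> by (simp add: t_def)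
qed

lemma game_iter_one_eq_one_minus_dual:
  "p \<in> Pos \<Longrightarrow> game_iter 1 T Wwin Wo Bo n p = 1 - game_iter 0 T (\<lambda>p. \<not> Wwin p) Bo Wo n p"
proof (induction n arbitrary: p)
  case (Suc n)
  let ?d = "game_iter 0 T (\<lambda>p. \<not> Wwin p) Bo Wo n"
  show ?case
  proof (cases "T p")
    case False
    have "game_iter 1 T Wwin Wo Bo n ` Wo p = (\<lambda>x. 1 - ?d x) ` Wo p"
      using Suc.IH Suc.prems Wo_subset by (force intro!: image_cong)
    moreover have "game_iter 1 T Wwin Wo Bo n ` Bo p = (\<lambda>x. 1 - ?d x) ` Bo p"
      using Suc.IH Suc.prems Bo_subset by (force intro!: image_cong)
    ultimately have "game_iter 1 T Wwin Wo Bo (Suc n) p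
        = ((1 - Min (?d ` Wo p)) + (1 - Max (?d ` Bo p))) / 2"
      using False Suc.prems finite_Wo finite_Bo Wo_nonempty Bo_nonempty
      by (simp add: game_iter.simps Max_image_one_minus Min_image_one_minus)
    also have "\<dots> = 1 - game_iter 0 T (\<lambda>p. \<not> Wwin p) Bo Wo (Suc n) p"
      using False by (simp add: game_iter.simps field_simps)
    finally show ?thesis .
  qed (simp add: game_iter.simps)
qed (simp add: game_iter.simps)

end

theorem proposition1:
  fixes Pos :: "'p set" and T Wwin :: "'p \<Rightarrow> bool" and Wo Bo :: "'p \<Rightarrow> 'p set"
  assumes "finite Pos"
    and "\<And>p. p \<in> Pos \<Longrightarrow> Wo p \<subseteq> Pos"
    and "\<And>p. p \<in> Pos \<Longrightarrow> Bo p \<subseteq> Pos"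
    and "\<And>p. p \<in> Pos \<Longrightarrow> \<not> T p \<Longrightarrow> Wo p \<noteq> {}"
    and "\<And>p. p \<in> Pos \<Longrightarrow> \<not> T p \<Longrightarrow> Bo p \<noteq> {}"
    and "P \<in> Pos"
  shows "alpha T Wwin Wo Bo P \<in> \<rat> \<and> beta T Wwin Wo Bo P \<in> \<rat>"
proof -
  interpret G: finite_game Pos T Wwin Wo Bo
    using assms by unfold_locales auto
  interpret dual: finite_game Pos T "\<lambda>p. \<not> Wwin p" Bo Wo
    using assms by unfold_locales auto
  have "alpha T Wwin Wo Bo P = G.win_prob P"
    unfolding alpha_def alpha_n_def G.win_prob_def ..
  moreover have "(\<lambda>n. beta_n T Wwin Wo Bo n P) \<longlonglongrightarrow> 1 - dual.win_prob P"
    unfolding beta_n_def G.game_iter_one_eq_one_minus_dual[OF assms(6)]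
    by (intro tendsto_intros dual.win_iter_tendsto assms(6))
  then have "beta T Wwin Wo Bo P = 1 - dual.win_prob P"
    unfolding beta_def by (rule limI)
  ultimately show ?thesis
    using G.win_prob_rational dual.win_prob_rational assms(6) by simp
qed

end
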